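(* Let $k, m, s$ be positive integers with $m \geq 2$ and $s \leq k-2$, let $n = km$, let $B_1,\ldots,B_m$ be a partition of $[n]$ into blocks with $|B_i| = k$, choose $T_i \subset B_i$ with $|T_i| = s$ for each $i$, put $T = \bigcup_{i=1}^m T_i$, and let $\mathcal{F}$ be the union-closed family generated by $\{B_i \cup \{t\} : i \in [m],\ t \in T\}$. Then every member of $\mathcal{F}$ contains at least one block, and for each $j \in [m]$ the number $N_j$ of members of $\mathcal{F}$ containing exactly $j$ of the blocks $B_1,\ldots,B_m$ is $N_j = \binom{m}{j} 2^{(m-j)s}$; consequently $$|\mathcal{F}| = 2^{(m-1)s}\sum_{j=1}^m \binom{m}{j} 2^{-(j-1)s}.$$
   Context: $[n] = \{1,\ldots,n\}$. A family of sets is union-closed if it contains the union of any two of its members. The union-closed family generated by $\mathcal{G} \subset \mathcal{P}(X)$ is the smallest union-closed family of subsets of $X$ containing $\mathcal{G}$. *)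

theory Defs
  imports Complex_Main
begin

definition union_closed :: "'a set set \<Rightarrow> bool" where
  "union_closed F \<longleftrightarrow> (\<forall>A\<in>F. \<forall>B\<in>F. A \<union> B \<in> F)"

definition uc_generated :: "'a set \<Rightarrow> 'a set set \<Rightarrow> 'a set set" where
  "uc_generated X G = \<Inter>{F. F \<subseteq> Pow X \<and> G \<subseteq> F \<and> union_closed F}"

end

theory Submission
  imports Defs
begin

text \<open>Every member of the family is a union of some nonempty set \<open>J\<close> of blocks and some set of
marked points; conversely every such set arises, since \<open>B i\<close> itself is \<open>B i \<union> {t}\<close> for any
\<open>t \<in> T i\<close>. Because each block contains an unmarked point, the set \<open>J\<close> is recovered as the set of
blocks contained in the member, and the marked points outside \<open>J\<close> can be chosen freely. Members
containing exactly \<open>j\<close> blocks are therefore counted by choosing \<open>J\<close> in \<open>m choose j\<close> ways and a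
subset of the \<open>(m - j) s\<close> marked points outside \<open>J\<close>.\<close>

lemma union_closed_Union:
  assumes "finite H" "H \<noteq> {}" "H \<subseteq> F" "union_closed F"
  shows "\<Union>H \<in> F"
  using assms
proof (induction H rule: finite_ne_induct)
  case (insert x H)
  then show ?case unfolding union_closed_def by auto
qed auto

lemma uc_generated_eqI:
  assumes "R \<subseteq> Pow X" "G \<subseteq> R" "union_closed R"
    and "\<And>A. A \<in> R \<Longrightarrow> \<exists>H. finite H \<and> H \<noteq> {} \<and> H \<subseteq> G \<and> \<Union>H = A"
  shows "uc_generated X G = R"
proof
  show "uc_generated X G \<subseteq> R"
    unfolding uc_generated_def by (rule Inter_lower) (simp add: assms(1-3))
  show "R \<subseteq> uc_generated X G"
  proof
    fix A assume "A \<in> R"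
    then obtain H where H: "finite H" "H \<noteq> {}" "H \<subseteq> G" "\<Union>H = A"
      using assms(4) by blast
    show "A \<in> uc_generated X G"
      unfolding uc_generated_def
    proof (rule InterI)
      fix F assume "F \<in> {F. F \<subseteq> Pow X \<and> G \<subseteq> F \<and> union_closed F}"
      then show "A \<in> F"
        using union_closed_Union[of H F] H by auto
    qed
  qed
qed

locale marked_blocks =
  fixes I :: "'i set" and B T :: "'i \<Rightarrow> 'a set" and s :: nat
  assumes finite_I: "finite I"
    and blocks_disjoint: "\<And>i i'. i \<in> I \<Longrightarrow> i' \<in> I \<Longrightarrow> i \<noteq> i' \<Longrightarrow> B i \<inter> B i' = {}"
    and marks_psubset: "\<And>i. i \<in> I \<Longrightarrow> T i \<subset> B i"
    and card_marks: "\<And>i. i \<in> I \<Longrightarrow> card (T i) = s"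
    and marks_pos: "0 < s"
begin

definition marked :: "'a set" where
  "marked = (\<Union>i\<in>I. T i)"

definition generators :: "'a set set" where
  "generators = {B i \<union> {t} | i t. i \<in> I \<and> t \<in> marked}"

definition span :: "'i set \<Rightarrow> 'a set \<Rightarrow> 'a set" where
  "span J S = (\<Union>i\<in>J. B i) \<union> S"

definition family :: "'a set set" where
  "family = {span J S | J S. J \<subseteq> I \<and> J \<noteq> {} \<and> S \<subseteq> marked}"

definition blocks_in :: "'a set \<Rightarrow> 'i set" where
  "blocks_in A = {i \<in> I. B i \<subseteq> A}"

lemma finite_marks: "i \<in> I \<Longrightarrow> finite (T i)"
  by (rule card_ge_0_finite) (simp add: card_marks marks_pos)

lemma marks_subset: "i \<in> I \<Longrightarrow> T i \<subseteq> B i"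
  using marks_psubset by blast

lemma finite_marked: "finite marked"
  unfolding marked_def using finite_I finite_marks by blast

lemma marked_Int_block: "i \<in> I \<Longrightarrow> marked \<inter> B i = T i"
  unfolding marked_def using blocks_disjoint marks_subset by blast

lemma blocks_in_span:
  assumes "J \<subseteq> I" "S \<subseteq> marked"
  shows "blocks_in (span J S) = J"
proof
  show "J \<subseteq> blocks_in (span J S)"
    using assms(1) unfolding blocks_in_def span_def by blast
  show "blocks_in (span J S) \<subseteq> J"
  proof
    fix i assume "i \<in> blocks_in (span J S)"
    then have i: "i \<in> I" "B i \<subseteq> (\<Union>i\<in>J. B i) \<union> S"
      unfolding blocks_in_def span_def by auto
    show "i \<in> J"
    proof (rule ccontr)
      assume "i \<notin> J"
      then have "B i \<inter> (\<Union>i\<in>J. B i) = {}"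
        using i(1) assms(1) blocks_disjoint by blast
      then have "B i \<subseteq> marked \<inter> B i"
        using i(2) assms(2) by blast
      then show False
        using marked_Int_block[OF i(1)] marks_psubset[OF i(1)] by blast
    qed
  qed
qed

lemma span_inject:
  assumes "J \<subseteq> I" "S \<subseteq> marked - (\<Union>i\<in>J. B i)"
    and "J' \<subseteq> I" "S' \<subseteq> marked - (\<Union>i\<in>J'. B i)"
    and "span J S = span J' S'"
  shows "J = J' \<and> S = S'"
proof
  have "S \<subseteq> marked" "S' \<subseteq> marked" using assms(2,4) by auto
  then show "J = J'"
    using blocks_in_span[of J S] blocks_in_span[of J' S'] assms(1,3,5) by metis
  then show "S = S'"
    using assms(2,4,5) unfolding span_def by blast
qed

lemma family_union_closed: "union_closed family"
  unfolding union_closed_def family_def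
proof (clarify)
  fix J S J' S'
  assume "J \<subseteq> I" "J \<noteq> {}" "S \<subseteq> marked" "J' \<subseteq> I" "J' \<noteq> {}" "S' \<subseteq> marked"
  moreover have "span J S \<union> span J' S' = span (J \<union> J') (S \<union> S')"
    unfolding span_def by blast
  ultimately show "\<exists>J'' S''. span J S \<union> span J' S' = span J'' S''
      \<and> J'' \<subseteq> I \<and> J'' \<noteq> {} \<and> S'' \<subseteq> marked"
    by blast
qed

lemma generators_subset_family: "generators \<subseteq> family"
proof
  fix A assume "A \<in> generators"
  then obtain i t where "A = B i \<union> {t}" "i \<in> I" "t \<in> marked"
    unfolding generators_def by blast
  then have "A = span {i} {t} \<and> {i} \<subseteq> I \<and> {t} \<subseteq> marked"
    unfolding span_def by simp
  then show "A \<in> family" unfolding family_def by blast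
qed

lemma block_in_generators:
  assumes "i \<in> I"
  shows "B i \<in> generators"
proof -
  have "T i \<noteq> {}" using card_marks[OF assms] marks_pos by auto
  then obtain t where t: "t \<in> T i" by blast
  then have "B i = B i \<union> {t}" "t \<in> marked"
    using assms marks_psubset unfolding marked_def by blast+
  then show ?thesis unfolding generators_def using assms by blast
qed

lemma family_Union_generators:
  assumes "A \<in> family"
  shows "\<exists>H. finite H \<and> H \<noteq> {} \<and> H \<subseteq> generators \<and> \<Union>H = A"
proof -
  obtain J S where JS: "A = span J S" "J \<subseteq> I" "J \<noteq> {}" "S \<subseteq> marked"
    using assms unfolding family_def by blast
  obtain i0 where i0: "i0 \<in> J" using JS(3) by blast
  define H where "H = B ` J \<union> (\<lambda>t. B i0 \<union> {t}) ` S"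
  have "finite J" using JS(2) finite_I by (rule finite_subset)
  moreover have "finite S" using JS(4) finite_marked by (rule finite_subset)
  ultimately have "finite H" unfolding H_def by simp
  moreover have "H \<noteq> {}" "\<Union>H = A"
    unfolding H_def JS(1) span_def using i0 by blast+
  moreover have "H \<subseteq> generators"
  proof -
    have "B ` J \<subseteq> generators"
      using JS(2) block_in_generators by blast
    moreover have "(\<lambda>t. B i0 \<union> {t}) ` S \<subseteq> generators"
    proof (rule image_subsetI)
      fix t assume "t \<in> S"
      then show "B i0 \<union> {t} \<in> generators"
        using JS(2,4) i0 unfolding generators_def by blast
    qed
    ultimately show ?thesis unfolding H_def by blast
  qed
  ultimately show ?thesis by blast
qed

lemma uc_generated_eq_family:
  assumes "(\<Union>i\<in>I. B i) \<subseteq> X"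
  shows "uc_generated X generators = family"
proof (rule uc_generated_eqI)
  have "marked \<subseteq> X"
    using assms marks_subset unfolding marked_def by blast
  then show "family \<subseteq> Pow X"
    using assms unfolding family_def span_def by blast
qed (use family_union_closed generators_subset_family family_Union_generators in auto)

lemma card_marked_outside:
  assumes "J \<subseteq> I"
  shows "card (marked - (\<Union>i\<in>J. B i)) = (card I - card J) * s"
proof -
  have "marked - (\<Union>i\<in>J. B i) = (\<Union>l\<in>I - J. T l)"
  proof (intro equalityI subsetI)
    fix x assume "x \<in> marked - (\<Union>i\<in>J. B i)"
    then obtain l where "l \<in> I" "x \<in> T l" "x \<notin> (\<Union>i\<in>J. B i)"
      unfolding marked_def by blast
    then show "x \<in> (\<Union>l\<in>I - J. T l)" using marks_subset by blast
  next
    fix x assume "x \<in> (\<Union>l\<in>I - J. T l)"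
    then obtain l where l: "l \<in> I" "l \<notin> J" "x \<in> B l" "x \<in> T l"
      using marks_subset by blast
    have "x \<notin> B i" if "i \<in> J" for i
      using l that assms blocks_disjoint[of l i] by blast
    then show "x \<in> marked - (\<Union>i\<in>J. B i)"
      using l unfolding marked_def by blast
  qed
  moreover have "card (\<Union>l\<in>I - J. T l) = (\<Sum>l\<in>I - J. card (T l))"
  proof (rule card_UN_disjoint)
    show "\<forall>l\<in>I - J. \<forall>l'\<in>I - J. l \<noteq> l' \<longrightarrow> T l \<inter> T l' = {}"
    proof (intro ballI impI)
      fix l l' assume "l \<in> I - J" "l' \<in> I - J" "l \<noteq> l'"
      then show "T l \<inter> T l' = {}"
        using blocks_disjoint[of l l'] marks_subset[of l] marks_subset[of l'] by blast
    qed
  qed (use finite_I finite_marks in auto)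
  moreover have "card (I - J) = card I - card J"
    using assms finite_I by (simp add: card_Diff_subset finite_subset)
  ultimately show ?thesis using card_marks by simp
qed

lemma family_layer_eq_image:
  assumes "0 < j"
  shows "{A \<in> family. card (blocks_in A) = j}
    = (\<lambda>(J, S). span J S) ` (SIGMA J:{J. J \<subseteq> I \<and> card J = j}. Pow (marked - (\<Union>i\<in>J. B i)))"
    (is "?L = _ ` ?D")
proof
  show "?L \<subseteq> (\<lambda>(J, S). span J S) ` ?D"
  proof
    fix A assume "A \<in> ?L"
    then obtain J S where JS: "A = span J S" "J \<subseteq> I" "S \<subseteq> marked" "card (blocks_in A) = j"
      unfolding family_def by blast
    then have "card J = j" using blocks_in_span by simp
    moreover have "A = span J (S - (\<Union>i\<in>J. B i))"
      using JS(1) unfolding span_def by blast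
    ultimately show "A \<in> (\<lambda>(J, S). span J S) ` ?D"
      using JS(2,3) by (intro image_eqI[of _ _ "(J, S - (\<Union>i\<in>J. B i))"]) auto
  qed
  show "(\<lambda>(J, S). span J S) ` ?D \<subseteq> ?L"
  proof clarify
    fix J S assume J: "J \<subseteq> I" "j = card J" and S: "S \<subseteq> marked - (\<Union>i\<in>J. B i)"
    then have "J \<noteq> {}" "S \<subseteq> marked" using assms S by auto
    then show "span J S \<in> family \<and> card (blocks_in (span J S)) = card J"
      using J(1) blocks_in_span[of J S] unfolding family_def by auto
  qed
qed

lemma card_family_layer:
  assumes "0 < j"
  shows "card {A \<in> family. card (blocks_in A) = j} = (card I choose j) * 2 ^ ((card I - j) * s)"
proof -
  let ?JJ = "{J. J \<subseteq> I \<and> card J = j}"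
  let ?D = "SIGMA J:?JJ. Pow (marked - (\<Union>i\<in>J. B i))"
  have "inj_on (\<lambda>(J, S). span J S) ?D"
  proof (rule inj_onI, clarify)
    fix J S J' S'
    assume "J \<subseteq> I" "S \<subseteq> marked - (\<Union>i\<in>J. B i)" "J' \<subseteq> I" "S' \<subseteq> marked - (\<Union>i\<in>J'. B i)"
      and "span J S = span J' S'"
    then show "J = J' \<and> S = S'" by (rule span_inject)
  qed
  then have "card {A \<in> family. card (blocks_in A) = j} = card ?D"
    unfolding family_layer_eq_image[OF assms] by (rule card_image)
  also have "\<dots> = (\<Sum>J\<in>?JJ. 2 ^ ((card I - j) * s))"
    using finite_I finite_marked
    by (subst card_SigmaI) (auto simp: card_Pow card_marked_outside intro!: sum.cong)
  also have "\<dots> = (card I choose j) * 2 ^ ((card I - j) * s)"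
    using n_subsets[OF finite_I] by simp
  finally show ?thesis .
qed

lemma family_eq_layers:
  "family = (\<Union>j\<in>{1..card I}. {A \<in> family. card (blocks_in A) = j})"
proof -
  have "card (blocks_in A) \<in> {1..card I}" if A: "A \<in> family" for A
  proof -
    obtain J S where JS: "A = span J S" "J \<subseteq> I" "J \<noteq> {}" "S \<subseteq> marked"
      using A unfolding family_def by blast
    then have "blocks_in A = J" using blocks_in_span by simp
    moreover have "finite J" using JS(2) finite_I finite_subset by blast
    ultimately show ?thesis
      using JS(2,3) finite_I card_mono[of I J] by (simp add: Suc_le_eq card_gt_0_iff)
  qed
  then show ?thesis by blast
qed

lemma finite_family: "finite family"
proof (rule finite_subset)
  show "family \<subseteq> (\<lambda>(J, S). span J S) ` (Pow I \<times> Pow marked)"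
    unfolding family_def by auto
qed (use finite_I finite_marked in simp)

lemma card_family:
  "card family = (\<Sum>j=1..card I. (card I choose j) * 2 ^ ((card I - j) * s))"
proof -
  have "card family = (\<Sum>j=1..card I. card {A \<in> family. card (blocks_in A) = j})"
    using finite_family by (subst family_eq_layers) (auto intro: card_UN_disjoint)
  then show ?thesis using card_family_layer by simp
qed

end

lemma sum_binomial_layers_factor:
  fixes m s :: nat
  shows "real (\<Sum>j=1..m. (m choose j) * 2 ^ ((m - j) * s))
    = 2 ^ ((m - 1) * s) * (\<Sum>j=1..m. real (m choose j) * (1/2) ^ ((j - 1) * s))"
proof -
  have exponent_split: "(2::real) ^ ((m - j) * s) = 2 ^ ((m - 1) * s) * (1/2) ^ ((j - 1) * s)"
    if "j \<in> {1..m}" for j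
  proof -
    have "(m - 1) * s = (m - j) * s + (j - 1) * s"
      using that by (simp add: add_mult_distrib[symmetric])
    then show ?thesis by (simp add: power_add power_one_over)
  qed
  have "real (\<Sum>j=1..m. (m choose j) * 2 ^ ((m - j) * s))
      = (\<Sum>j=1..m. 2 ^ ((m - 1) * s) * (real (m choose j) * (1/2) ^ ((j - 1) * s)))"
    unfolding of_nat_sum
  proof (rule sum.cong)
    fix j assume "j \<in> {1..m}"
    then show "real ((m choose j) * 2 ^ ((m - j) * s))
        = 2 ^ ((m - 1) * s) * (real (m choose j) * (1/2) ^ ((j - 1) * s))"
      using exponent_split[of j] by simp
  qed simp
  also have "\<dots> = 2 ^ ((m - 1) * s) * (\<Sum>j=1..m. real (m choose j) * (1/2) ^ ((j - 1) * s))"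
    by (simp only: sum_distrib_left)
  finally show ?thesis .
qed

theorem mainTheorem2:
  fixes k m s n :: nat and B T :: "nat \<Rightarrow> nat set" and \<F> :: "nat set set"
  assumes "0 < k" and "0 < m" and "0 < s" and "m \<ge> 2" and "s \<le> k - 2"
    and "n = k * m"
    and "\<forall>i\<in>{1..m}. B i \<subseteq> {1..n} \<and> card (B i) = k"
    and "\<forall>i\<in>{1..m}. \<forall>i'\<in>{1..m}. i \<noteq> i' \<longrightarrow> B i \<inter> B i' = {}"
    and "(\<Union>i\<in>{1..m}. B i) = {1..n}"
    and "\<forall>i\<in>{1..m}. T i \<subseteq> B i \<and> card (T i) = s"
    and "\<F> = uc_generated {1..n} {B i \<union> {t} | i t. i \<in> {1..m} \<and> t \<in> (\<Union>l\<in>{1..m}. T l)}"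
  shows "(\<forall>A\<in>\<F>. \<exists>i\<in>{1..m}. B i \<subseteq> A)
    \<and> (\<forall>j\<in>{1..m}. card {A\<in>\<F>. card {i\<in>{1..m}. B i \<subseteq> A} = j} = (m choose j) * 2 ^ ((m - j) * s))
    \<and> real (card \<F>) = 2 ^ ((m - 1) * s) * (\<Sum>j=1..m. real (m choose j) * (1/2) ^ ((j - 1) * s))"
proof -
  have "T i \<subset> B i" if i: "i \<in> {1..m}" for i
  proof -
    have "card (T i) < card (B i)" using assms(1,5,7,10) i by fastforce
    then have "T i \<noteq> B i" by auto
    then show ?thesis using assms(10) i by blast
  qed
  then interpret marked_blocks "{1..m}" B T s
    using assms(3,8,10) by unfold_locales auto
  have "(\<Union>i\<in>{1..m}. B i) \<subseteq> {1..n}" using assms(7) by blast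
  then have "uc_generated {1..n} generators = family" by (rule uc_generated_eq_family)
  then have F: "\<F> = family" using assms(11) unfolding generators_def marked_def by simp
  show ?thesis
  proof (intro conjI ballI)
    fix A assume "A \<in> \<F>"
    then show "\<exists>i\<in>{1..m}. B i \<subseteq> A"
      unfolding F family_def span_def by blast
  next
    fix j :: nat assume "j \<in> {1..m}"
    then show "card {A\<in>\<F>. card {i\<in>{1..m}. B i \<subseteq> A} = j} = (m choose j) * 2 ^ ((m - j) * s)"
      using card_family_layer[of j] unfolding F blocks_in_def by simp
  next
    have "real (card \<F>) = real (\<Sum>j=1..m. (m choose j) * 2 ^ ((m - j) * s))"
      using card_family unfolding F by simp
    then show "real (card \<F>) = 2 ^ ((m - 1) * s) * (\<Sum>j=1..m. real (m choose j) * (1/2) ^ ((j - 1) * s))"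
      by (simp only: sum_binomial_layers_factor)
  qed
qed

end
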